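(* Consider the $[\![15,7,3]\!]$ Hamming code and the qubit permutation $\sigma_3 = (1,10,15,3,8,13)(4,6)(5,12,11)(7,14,9)$. Let $U = \prod_{i:\,\sigma_3(i)\ne i}\mathrm{CZ}_{i,\sigma_3(i)}$ (so the two gates from the 2-cycle $(4,6)$ cancel). Then there is a product $P$ of Pauli $Z$ operators such that $PU$ preserves the code space, and, up to a logical Pauli operator and global phase, $PU$ acts on the code space as the product of logical $\mathrm{CZ}$ gates $\overline{\mathrm{CZ}}_{2,3}\overline{\mathrm{CZ}}_{3,4}\overline{\mathrm{CZ}}_{4,5}\overline{\mathrm{CZ}}_{5,6}\overline{\mathrm{CZ}}_{6,7}\overline{\mathrm{CZ}}_{7,2}$ (logical $\mathrm{CZ}$ gates following the cycle $(2,3,4,5,6,7)$, with logical qubit 1 untouched).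
   Context: The $[\![15,7,3]\!]$ Hamming code: index physical qubits $1,\dots,15$, and for $b\in\{1,2,4,8\}$ let $R_b = \{i\in\{1,\dots,15\} : \text{the binary expansion of } i \text{ contains } b\}$. The stabilizer group is generated by $X_{R_b}$ and $Z_{R_b}$, $b\in\{1,2,4,8\}$. Logical operators are $\bar X_j = X_{T_j}$, $\bar Z_j = Z_{T_j}$ with $T_1=\{1,2,4,8,15\}$, $T_2=\{1,2,5,10,12\}$, $T_3=\{1,2,6,11,14\}$, $T_4=\{1,2,7,9,13\}$, $T_5=\{1,4,6,9,10\}$, $T_6=\{1,4,7,12,14\}$, $T_7=\{1,8,10,13,14\}$. $\mathrm{CZ}_{a,b} = \mathbb 1 - 2|11\rangle\langle 11|$ on qubits $a,b$. *)

theory Defs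
  imports Complex_Main
begin

text \<open>Computational basis states of qubits 1..15 are indexed by subsets x of {1..15}
(the set of qubits in state 1). A state is a function from basis labels to amplitudes,
supported on subsets of {1..15}.\<close>

type_synonym state = "nat set \<Rightarrow> complex"

definition qubits :: "nat set" where "qubits = {1..15}"

definition is_state :: "state \<Rightarrow> bool" where
  "is_state \<psi> \<longleftrightarrow> (\<forall>x. \<not> x \<subseteq> qubits \<longrightarrow> \<psi> x = 0)"

definition Xop :: "nat set \<Rightarrow> state \<Rightarrow> state" where
  "Xop R \<psi> = (\<lambda>x. \<psi> ((x - R) \<union> (R - x)))"

definition Zop :: "nat set \<Rightarrow> state \<Rightarrow> state" where
  "Zop R \<psi> = (\<lambda>x. (-1) ^ card (x \<inter> R) * \<psi> x)"

definition CZop :: "nat \<Rightarrow> nat \<Rightarrow> state \<Rightarrow> state" where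
  "CZop a b \<psi> = (\<lambda>x. (if a \<in> x \<and> b \<in> x then -1 else 1) * \<psi> x)"

definition Rset :: "nat \<Rightarrow> nat set" where
  "Rset b = {i \<in> {1..15}. odd (i div b)}"

definition codespace :: "state set" where
  "codespace = {\<psi>. is_state \<psi> \<and>
     (\<forall>b \<in> {1,2,4,8}. Xop (Rset b) \<psi> = \<psi> \<and> Zop (Rset b) \<psi> = \<psi>)}"

definition Tset :: "nat \<Rightarrow> nat set" where
  "Tset j = (if j = 1 then {1,2,4,8,15}
        else if j = 2 then {1,2,5,10,12}
        else if j = 3 then {1,2,6,11,14}
        else if j = 4 then {1,2,7,9,13}
        else if j = 5 then {1,4,6,9,10}
        else if j = 6 then {1,4,7,12,14}
        else if j = 7 then {1,8,10,13,14} else {})"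

definition LX :: "nat \<Rightarrow> state \<Rightarrow> state" where "LX j = Xop (Tset j)"
definition LZ :: "nat \<Rightarrow> state \<Rightarrow> state" where "LZ j = Zop (Tset j)"

definition logical_pauli :: "(nat \<Rightarrow> bool) \<Rightarrow> (nat \<Rightarrow> bool) \<Rightarrow> state \<Rightarrow> state" where
  "logical_pauli a b = foldr (\<circ>)
     (map (\<lambda>j. (if a j then LX j else id) \<circ> (if b j then LZ j else id)) [1..<8]) id"

text \<open>Logical CZ: (1 + Zbar_a + Zbar_b - Zbar_a Zbar_b)/2, i.e. 1 - 2 |11><11| logically.\<close>
definition LCZ :: "nat \<Rightarrow> nat \<Rightarrow> state \<Rightarrow> state" where
  "LCZ a b \<psi> = (\<lambda>x. (\<psi> x + LZ a \<psi> x + LZ b \<psi> x - LZ a (LZ b \<psi>) x) / 2)"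

definition sigma3 :: "nat \<Rightarrow> nat" where
  "sigma3 i = (if i = 1 then 10 else if i = 10 then 15 else if i = 15 then 3
     else if i = 3 then 8 else if i = 8 then 13 else if i = 13 then 1
     else if i = 4 then 6 else if i = 6 then 4
     else if i = 5 then 12 else if i = 12 then 11 else if i = 11 then 5
     else if i = 7 then 14 else if i = 14 then 9 else if i = 9 then 7 else i)"

definition Uop :: "state \<Rightarrow> state" where
  "Uop = foldr (\<circ>) (map (\<lambda>i. CZop i (sigma3 i)) (filter (\<lambda>i. sigma3 i \<noteq> i) [1..<16])) id"

end

theory Submission
  imports Defs
begin

text \<open>All operators involved are diagonal in the computational basis: each multiplies the
amplitude of a basis word x by (-1)^f(x) for a Boolean phase function f. The code space consists
of states supported on words of the classical Hamming code (even overlap with every R_b) that are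
invariant under the flips x \<mapsto> x \<Delta> R_b. On Hamming words the phase of Z_2 U agrees with that
of Zbar_1 \<cdots> Zbar_7 times the cycle of logical CZ gates, a phase that depends on x only through
the parities of x \<inter> T_j. Each T_j meets each R_b evenly, so this logical phase is invariant
under the flips; hence Z_2 U commutes with the X stabilizers and preserves the code space.\<close>

definition phase_op :: "(nat set \<Rightarrow> bool) \<Rightarrow> state \<Rightarrow> state" where
  "phase_op f \<psi> = (\<lambda>x. (if f x then -1 else 1) * \<psi> x)"

definition parity :: "nat set \<Rightarrow> nat set \<Rightarrow> bool" where
  "parity A x \<longleftrightarrow> odd (card (x \<inter> A))"

lemma phase_op_phase_op [simp]: "phase_op f (phase_op g \<psi>) = phase_op (\<lambda>x. f x \<noteq> g x) \<psi>"
  by (auto simp: phase_op_def)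

lemma parity_empty [simp]: "\<not> parity {} x"
  by (simp add: parity_def)

lemma parity_insert [simp]:
  "finite A \<Longrightarrow> a \<notin> A \<Longrightarrow> parity (insert a A) x \<longleftrightarrow> ((a \<in> x) \<noteq> parity A x)"
  by (cases "a \<in> x") (auto simp: parity_def Int_insert_right)

lemma parity_sym_diff:
  assumes "finite A"
  shows "parity A (sym_diff x R) \<longleftrightarrow> (parity A x \<noteq> parity A R)"
  using assms by (induction A rule: finite_induct) auto

lemma Zop_eq_phase_op: "Zop R = phase_op (parity R)"
  by (intro ext) (simp add: Zop_def phase_op_def parity_def minus_one_power_iff)

lemma CZop_eq_phase_op: "CZop a b = phase_op (\<lambda>x. a \<in> x \<and> b \<in> x)"
  by (intro ext) (simp add: CZop_def phase_op_def)

lemma LCZ_eq_phase_op: "LCZ a b = phase_op (\<lambda>x. parity (Tset a) x \<and> parity (Tset b) x)"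
  by (intro ext) (simp add: LCZ_def LZ_def Zop_eq_phase_op phase_op_def field_simps)

definition odd_count :: "bool list \<Rightarrow> bool" where
  "odd_count bs \<longleftrightarrow> odd (length (filter id bs))"

lemma odd_count_Nil [simp]: "\<not> odd_count []"
  by (simp add: odd_count_def)

lemma odd_count_Cons [simp]: "odd_count (b # bs) \<longleftrightarrow> (b \<noteq> odd_count bs)"
  by (simp add: odd_count_def)

lemma foldr_comp_phase_op:
  "foldr (\<circ>) (map (\<lambda>i. phase_op (f i)) is) id = phase_op (\<lambda>x. odd_count (map (\<lambda>i. f i x) is))"
  by (induction "is") (auto simp: phase_op_def fun_eq_iff)

lemma Xop_phase_op_commute:
  assumes "\<And>x. f (sym_diff x R) = f x"
  shows "Xop R (phase_op f \<psi>) = phase_op f (Xop R \<psi>)"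
  by (simp add: Xop_def phase_op_def assms)

lemma Zop_phase_op_commute: "Zop R (phase_op f \<psi>) = phase_op f (Zop R \<psi>)"
  by (simp add: Zop_eq_phase_op) meson

definition hamming_word :: "nat set \<Rightarrow> bool" where
  "hamming_word x \<longleftrightarrow> (\<forall>b \<in> {1,2,4,8}. \<not> parity (Rset b) x)"

lemma codespace_supported_on_hamming_words:
  assumes "\<psi> \<in> codespace" and "\<psi> x \<noteq> 0"
  shows "hamming_word x"
  unfolding hamming_word_def
proof
  fix b :: nat
  assume "b \<in> {1,2,4,8}"
  then have "Zop (Rset b) \<psi> x = \<psi> x"
    using assms(1) by (auto simp: codespace_def)
  then show "\<not> parity (Rset b) x"
    using assms(2) by (auto simp: Zop_eq_phase_op phase_op_def)
qed

lemma phase_op_eq_on_codespace: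
  assumes "\<psi> \<in> codespace" and "\<And>x. hamming_word x \<Longrightarrow> f x = g x"
  shows "phase_op f \<psi> = phase_op g \<psi>"
  using assms codespace_supported_on_hamming_words by (fastforce simp: phase_op_def)

lemma phase_op_preserves_codespace:
  assumes "\<psi> \<in> codespace" and "\<And>b x. b \<in> {1,2,4,8} \<Longrightarrow> f (sym_diff x (Rset b)) = f x"
  shows "phase_op f \<psi> \<in> codespace"
  using assms
  by (auto simp: codespace_def Xop_phase_op_commute Zop_phase_op_commute)
    (simp add: is_state_def phase_op_def)

lemma upt_1_16: "[1..<16] = [1,2,3,4,5,6,7,8,9,10,11,12,13,14,15::nat]"
  by (simp add: upt_rec)

lemma upt_1_8: "[1..<8] = [1,2,3,4,5,6,7::nat]"
  by (simp add: upt_rec)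

lemma Rset_eq:
  "Rset 1 = {1,3,5,7,9,11,13,15}" "Rset 2 = {2,3,6,7,10,11,14,15}"
  "Rset 4 = {4,5,6,7,12,13,14,15}" "Rset 8 = {8,9,10,11,12,13,14,15}"
proof -
  have filt: "Rset b = set (filter (\<lambda>i. odd (i div b)) [1..<16])" for b
    by (auto simp: Rset_def)
  show "Rset 1 = {1,3,5,7,9,11,13,15}" "Rset 2 = {2,3,6,7,10,11,14,15}"
    "Rset 4 = {4,5,6,7,12,13,14,15}" "Rset 8 = {8,9,10,11,12,13,14,15}"
    unfolding filt upt_1_16 by auto
qed

definition U_phase :: "nat set \<Rightarrow> bool" where
  "U_phase x \<longleftrightarrow> odd_count (map (\<lambda>i. i \<in> x \<and> sigma3 i \<in> x) (filter (\<lambda>i. sigma3 i \<noteq> i) [1..<16]))"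

definition logical_phase :: "nat set \<Rightarrow> bool" where
  "logical_phase x \<longleftrightarrow> (let t = \<lambda>j. parity (Tset j) x in
     odd_count (map t [1..<8]) \<noteq>
     odd_count (map (\<lambda>(a, b). t a \<and> t b) [(2, 3), (3, 4), (4, 5), (5, 6), (6, 7), (7, 2)]))"

lemma Uop_eq_phase_op: "Uop = phase_op U_phase"
  unfolding Uop_def CZop_eq_phase_op U_phase_def by (rule foldr_comp_phase_op)

lemma logical_circuit_eq_phase_op:
  "(\<lambda>x. 1 * logical_pauli (\<lambda>_. False) (\<lambda>_. True)
      ((LCZ 2 3 \<circ> LCZ 3 4 \<circ> LCZ 4 5 \<circ> LCZ 5 6 \<circ> LCZ 6 7 \<circ> LCZ 7 2) \<psi>) x)
   = phase_op logical_phase \<psi>"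
proof -
  have "logical_pauli (\<lambda>_. False) (\<lambda>_. True)
      = phase_op (\<lambda>x. odd_count (map (\<lambda>j. parity (Tset j) x) [1..<8]))"
    unfolding logical_pauli_def LZ_def Zop_eq_phase_op by (simp add: foldr_comp_phase_op)
  then show ?thesis
    by (simp add: LCZ_eq_phase_op logical_phase_def[abs_def] Let_def)
qed

lemma Tset_Rset_even_overlap: "b \<in> {1,2,4,8} \<Longrightarrow> \<not> parity (Tset j) (Rset b)"
  \<comment> \<open>the simplifier turns the index 1 into Suc 0, hence the second form of Rset_eq(1)\<close>
  unfolding Tset_def by (elim insertE emptyE) (simp_all add: Rset_eq Rset_eq(1)[unfolded One_nat_def])

lemma logical_phase_sym_diff_Rset:
  assumes "b \<in> {1,2,4,8}"
  shows "logical_phase (sym_diff x (Rset b)) = logical_phase x"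
proof -
  have "parity (Tset j) (sym_diff x (Rset b)) = parity (Tset j) x" for j
    using parity_sym_diff[of "Tset j"] Tset_Rset_even_overlap[OF assms] by (simp add: Tset_def)
  then show ?thesis
    by (simp add: logical_phase_def)
qed

lemma transversal_phase_on_hamming_words:
  assumes "hamming_word x"
  shows "(parity {2} x \<noteq> U_phase x) = logical_phase x"
  using assms
  unfolding hamming_word_def logical_phase_def U_phase_def upt_1_16 upt_1_8
  by (simp add: Rset_eq Rset_eq(1)[unfolded One_nat_def] Tset_def sigma3_def) argo

theorem mainTheorem9:
  shows "\<exists>S \<subseteq> qubits.
     (\<forall>\<psi> \<in> codespace. Zop S (Uop \<psi>) \<in> codespace) \<and>
     (\<exists>(a :: nat \<Rightarrow> bool) (b :: nat \<Rightarrow> bool) (c :: complex). cmod c = 1 \<and>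
        (\<forall>\<psi> \<in> codespace. Zop S (Uop \<psi>) =
           (\<lambda>x. c * logical_pauli a b
              ((LCZ 2 3 \<circ> LCZ 3 4 \<circ> LCZ 4 5 \<circ> LCZ 5 6 \<circ> LCZ 6 7 \<circ> LCZ 7 2) \<psi>) x)))"
proof -
  have on_code: "Zop {2} (Uop \<psi>) = phase_op logical_phase \<psi>" if "\<psi> \<in> codespace" for \<psi>
    using phase_op_eq_on_codespace[OF that transversal_phase_on_hamming_words]
    by (simp add: Zop_eq_phase_op Uop_eq_phase_op)
  have "phase_op logical_phase \<psi> \<in> codespace" if "\<psi> \<in> codespace" for \<psi>
    using phase_op_preserves_codespace[OF that logical_phase_sym_diff_Rset] .
  then show ?thesis
    using on_code logical_circuit_eq_phase_op
    by (intro exI[of _ "{2}"] conjI exI[of _ "\<lambda>_. False"] exI[of _ "\<lambda>_. True"] exI[of _ 1])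
      (auto simp: qubits_def)
qed

end
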